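(* For $n\ge2$, the natural action of $\mathrm{O}(2n)$ on $\mathbb{F}_2^{2n}$ has exactly four orbits: $\{0\}$, $\{j\}$, $\mathbb{F}_2^{2n,+}\setminus\{0,j\}$, and $\mathbb{F}_2^{2n,-}$.
   Context: All arithmetic is over $\mathbb{F}_2$. $\mathrm{O}(2n)$ is the group of binary $2n\times 2n$ matrices $A$ with $A^TA=AA^T=I$. $j=(1,\dots,1)^T$; $\mathbb{F}_2^{2n,+}$ (resp. $\mathbb{F}_2^{2n,-}$) is the set of vectors of even (resp. odd) Hamming weight. *)

theory Defs
  imports "HOL-Analysis.Analysis" "HOL-Library.Z2"
begin

definition orth_group :: "(bit ^ 'i ^ 'i) set" where
  "orth_group = {A :: bit ^ 'i ^ 'i. transpose A ** A = mat 1 \<and> A ** transpose A = mat 1}"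

definition all_ones :: "bit ^ 'i" where
  "all_ones = (\<chi> i. 1)"

definition hweight :: "bit ^ 'i \<Rightarrow> nat" where
  "hweight x = card {i. x $ i \<noteq> 0}"

definition even_vecs :: "(bit ^ 'i) set" where
  "even_vecs = {x. even (hweight x)}"

definition odd_vecs :: "(bit ^ 'i) set" where
  "odd_vecs = {x. odd (hweight x)}"

definition orth_orbit :: "bit ^ 'i \<Rightarrow> (bit ^ 'i) set" where
  "orth_orbit x = {A *v x | A. A \<in> (orth_group :: (bit ^ 'i ^ 'i) set)}"

end

theory Submission
  imports Defs
begin

text \<open>Over \<open>\<bbbF>\<^sub>2\<close> the weight parity of x is the value of the standard bilinear form
  \<open>x \<cdot> x\<close>, and an orthogonal matrix preserves this form and fixes \<open>j\<close> (its rows have odd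
  weight). Hence \<open>{0}\<close>, \<open>{j}\<close> and the two parity classes of the remaining vectors are
  unions of orbits. Conversely, if \<open>x \<cdot> x = y \<cdot> y\<close> and \<open>x \<cdot> (x + y) = 1\<close>, the
  transvection \<open>z \<mapsto> z + (z \<cdot> v) v\<close> with \<open>v = x + y\<close> is orthogonal and maps x to y; when
  \<open>x \<cdot> (x + y) = 0\<close> one first moves x to \<open>x + e\<^sub>a + e\<^sub>b\<close> for coordinates a, b
  with \<open>x\<^sub>a = 1\<close>, \<open>x\<^sub>b = 0\<close>, \<open>y\<^sub>a \<noteq> y\<^sub>b\<close>, which exist unless x or y is constant.
  For \<open>2n \<ge> 4\<close> all four classes are nonempty and distinct.\<close>

declare add_bit_eq_xor[simp del] mult_bit_eq_and[simp del]

lemma bit_add_self [simp]: "(a::bit) + a = 0"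
  by (cases a) (simp_all flip: one_add_one)

lemma bit_mult_self [simp]: "(a::bit) * a = a"
  by (cases a) simp_all

lemma of_nat_bit_eq_0_iff: "(of_nat m :: bit) = 0 \<longleftrightarrow> even m"
  by (induction m) (auto simp: add.commute[of 1])

lemma of_nat_bit_eq_1_iff: "(of_nat m :: bit) = 1 \<longleftrightarrow> odd m"
  by (metis bit_not_zero_iff of_nat_bit_eq_0_iff)

lemma vec_bit_add_self [simp]: "(x::bit^'i) + x = 0"
  by (simp add: vec_eq_iff)

lemma vec_bit_add_self_left [simp]: "(x::bit^'i) + (x + y) = y"
  by (simp add: vec_eq_iff)

definition bdot :: "bit ^ 'i \<Rightarrow> bit ^ 'i \<Rightarrow> bit" where
  "bdot x y = (\<Sum>i\<in>UNIV. x$i * y$i)"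

lemma bdot_commute: "bdot x y = bdot y x"
  by (simp add: bdot_def mult.commute)

lemma bdot_add_left: "bdot (x + y) z = bdot x z + bdot y z"
  by (simp add: bdot_def distrib_right sum.distrib)

lemma bdot_add_right: "bdot x (y + z) = bdot x y + bdot x z"
  by (simp add: bdot_def distrib_left sum.distrib)

lemma bdot_zero_left [simp]: "bdot 0 x = 0"
  by (simp add: bdot_def)

lemma bdot_scale_left: "bdot (c *s x) y = c * bdot x y"
  by (simp add: bdot_def sum_distrib_left mult.assoc)

lemma bdot_axis_right: "bdot x (axis a 1) = x$a"
  by (simp add: bdot_def axis_def if_distrib cong: if_cong)

lemma bdot_add_self: "bdot (x + y) (x + y) = bdot x x + bdot y y"
proof -
  have "bdot (x + y) (x + y) = bdot x x + bdot y y + (bdot x y + bdot y x)"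
    by (simp add: bdot_add_left bdot_add_right ac_simps)
  then show ?thesis
    by (simp add: bdot_commute[of y x])
qed

lemma bdot_self_eq_hweight: "bdot x x = of_nat (hweight x)"
proof -
  have "bdot x x = (\<Sum>i\<in>UNIV. of_bool (x$i \<noteq> 0))"
    unfolding bdot_def by (intro sum.cong) auto
  then show ?thesis
    by (simp add: hweight_def)
qed

lemma even_vecs_eq: "even_vecs = {x. bdot x x = 0}"
  by (simp add: even_vecs_def bdot_self_eq_hweight of_nat_bit_eq_0_iff)

lemma odd_vecs_eq: "odd_vecs = {x. bdot x x = 1}"
  by (simp add: odd_vecs_def bdot_self_eq_hweight of_nat_bit_eq_1_iff)

lemma bdot_all_ones_self: "bdot (all_ones :: bit^'i) all_ones = of_nat CARD('i)"
  by (simp add: bdot_self_eq_hweight hweight_def all_ones_def)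

lemma all_ones_neq_zero: "(all_ones :: bit^'i) \<noteq> 0"
  by (simp add: vec_eq_iff all_ones_def)

lemma bdot_matrix_vector_mult_left: "bdot (A *v x) y = bdot x (transpose A *v y)"
proof -
  have "bdot (A *v x) y = (\<Sum>i\<in>UNIV. \<Sum>j\<in>UNIV. A$i$j * x$j * y$i)"
    unfolding bdot_def matrix_vector_mult_def by (simp add: sum_distrib_right)
  also have "\<dots> = (\<Sum>j\<in>UNIV. \<Sum>i\<in>UNIV. A$i$j * x$j * y$i)"
    by (rule sum.swap)
  also have "\<dots> = bdot x (transpose A *v y)"
    unfolding bdot_def matrix_vector_mult_def transpose_def
    by (simp add: sum_distrib_left ac_simps)
  finally show ?thesis .
qed

lemma mat_1_in_orth_group: "mat 1 \<in> orth_group"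
  by (simp add: orth_group_def)

lemma transpose_in_orth_group: "A \<in> orth_group \<Longrightarrow> transpose A \<in> orth_group"
  by (simp add: orth_group_def)

lemma matrix_mult_in_orth_group:
  assumes "A \<in> orth_group" "B \<in> orth_group"
  shows "A ** B \<in> orth_group"
proof -
  have "transpose (A ** B) ** (A ** B) = transpose B ** (transpose A ** A) ** B"
    "(A ** B) ** transpose (A ** B) = A ** (B ** transpose B) ** transpose A"
    by (simp_all add: matrix_transpose_mul matrix_mul_assoc)
  then show ?thesis
    using assms by (simp add: orth_group_def)
qed

lemma orth_group_left_inverse: "A \<in> orth_group \<Longrightarrow> transpose A *v (A *v x) = x"
  by (simp add: matrix_vector_mul_assoc orth_group_def del: transpose_matrix_vector)

lemma orth_group_preserves_bdot: "A \<in> orth_group \<Longrightarrow> bdot (A *v x) (A *v y) = bdot x y"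
  by (simp add: bdot_matrix_vector_mult_left orth_group_left_inverse
      del: transpose_matrix_vector)

lemma orth_group_fixes_all_ones:
  assumes "A \<in> orth_group"
  shows "A *v all_ones = all_ones"
proof -
  have "(A ** transpose A) $ i $ i = 1" for i
    using assms by (simp add: orth_group_def mat_def)
  then show ?thesis
    by (simp add: vec_eq_iff all_ones_def matrix_vector_mult_def matrix_matrix_mult_def
        transpose_def)
qed

lemma mem_orth_orbit_iff: "y \<in> orth_orbit x \<longleftrightarrow> (\<exists>A\<in>orth_group. A *v x = y)"
  by (auto simp: orth_orbit_def)

lemma orth_orbit_trans:
  assumes "y \<in> orth_orbit x" "z \<in> orth_orbit y"
  shows "z \<in> orth_orbit x"
proof -
  obtain A B where "A \<in> orth_group" "B \<in> orth_group" "A *v x = y" "B *v y = z"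
    using assms by (auto simp: mem_orth_orbit_iff)
  then show ?thesis
    by (auto simp: mem_orth_orbit_iff matrix_vector_mul_assoc intro!: matrix_mult_in_orth_group)
qed

definition transvection :: "bit ^ 'i \<Rightarrow> bit ^ 'i ^ 'i" where
  "transvection v = (\<chi> i k. (if i = k then 1 else 0) + v$i * v$k)"

lemma transvection_apply: "transvection v *v x = x + bdot x v *s v"
proof -
  have "(transvection v *v x) $ i = (\<Sum>k\<in>UNIV. (if i = k then x$k else 0) + v$i * (x$k * v$k))"
    for i
    unfolding transvection_def matrix_vector_mult_def vec_lambda_beta
    by (intro sum.cong) (auto simp: algebra_simps)
  then show ?thesis
    by (simp add: vec_eq_iff sum.distrib sum_distrib_left bdot_def mult.commute)
qed

lemma transvection_in_orth_group:
  assumes "bdot v v = 0"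
  shows "transvection v \<in> orth_group"
proof -
  have sym: "transpose (transvection v) = transvection v"
    by (simp add: vec_eq_iff transvection_def transpose_def mult.commute)
  have "transvection v *v (transvection v *v x) = x" for x
  proof -
    have "bdot (x + bdot x v *s v) v = bdot x v"
      using assms by (simp add: bdot_add_left bdot_scale_left)
    then show ?thesis
      by (simp add: transvection_apply add.assoc)
  qed
  then have "transvection v ** transvection v = mat 1"
    by (metis matrix_eq matrix_vector_mul_assoc matrix_vector_mul_lid)
  then show ?thesis
    by (simp add: orth_group_def sym)
qed

lemma mem_orth_orbit_by_transvection:
  assumes "bdot x x = bdot y y" "bdot x (x + y) = 1"
  shows "y \<in> orth_orbit x"
proof -
  have "transvection (x + y) \<in> orth_group"
    using assms(1) by (intro transvection_in_orth_group) (simp add: bdot_add_self)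
  moreover have "transvection (x + y) *v x = y"
    using assms(2) by (simp add: transvection_apply)
  ultimately show ?thesis
    by (auto simp: mem_orth_orbit_iff)
qed

lemma obtain_separating_coords:
  assumes "x \<notin> {0, all_ones}" "y \<notin> {0, all_ones}"
  obtains a b where "x$a = 1" "x$b = 0" "y$a \<noteq> y$b"
proof -
  obtain a0 b0 where a0: "x$a0 = 1" and b0: "x$b0 = 0"
    using assms(1) by (auto simp: vec_eq_iff all_ones_def)
  have "\<exists>a b. x$a = 1 \<and> x$b = 0 \<and> y$a \<noteq> y$b"
  proof (rule ccontr)
    assume "\<not> ?thesis"
    then have "y$i = y$a0" for i
      using a0 b0 by (cases "x$i") metis+
    then show False
      using assms(2) by (cases "y$a0") (auto simp: vec_eq_iff all_ones_def)
  qed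
  then show ?thesis
    using that by blast
qed

lemma mem_orth_orbit_if_same_parity:
  assumes "x \<notin> {0, all_ones}" "y \<notin> {0, all_ones}" "bdot x x = bdot y y"
  shows "y \<in> orth_orbit x"
proof (cases "bdot x (x + y) = 1")
  case True
  then show ?thesis
    using assms(3) by (rule mem_orth_orbit_by_transvection[rotated])
next
  case False
  then have xy: "bdot x x + bdot x y = 0"
    by (simp add: bdot_add_right)
  obtain a b where ab: "x$a = 1" "x$b = 0" "y$a \<noteq> y$b"
    using assms(1,2) by (rule obtain_separating_coords)
  define u where "u = axis a (1::bit) + axis b 1"
  have uu: "bdot u u = 0"
    by (simp add: u_def bdot_add_self bdot_axis_right)
  have xu: "bdot x u = 1"
    using ab by (simp add: u_def bdot_add_right bdot_axis_right)
  have yu: "bdot y u = 1"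
    using ab(3) by (cases "y$a"; cases "y$b")
      (simp_all add: u_def bdot_add_right bdot_axis_right flip: one_add_one)
  have zz: "bdot (x + u) (x + u) = bdot x x"
    by (simp only: bdot_add_self uu add_0_right)
  \<comment> \<open>Since u is isotropic with \<open>x \<cdot> u = y \<cdot> u = 1\<close>, both steps \<open>x \<mapsto> x + u \<mapsto> y\<close> are single transvections.\<close>
  have "bdot (x + u) (x + u + y) = bdot (x + u) (x + u) + bdot (x + u) y"
    by (rule bdot_add_right)
  also have "\<dots> = bdot x x + bdot x y + bdot y u"
    by (simp only: zz) (simp add: bdot_add_left bdot_commute[of u y] add.assoc)
  finally have "y \<in> orth_orbit (x + u)"
    using xy yu zz assms(3) by (intro mem_orth_orbit_by_transvection) simp_all
  moreover have "x + u \<in> orth_orbit x"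
    using zz xu by (intro mem_orth_orbit_by_transvection) simp_all
  ultimately show ?thesis
    by (blast intro: orth_orbit_trans)
qed

lemma orth_orbit_zero: "orth_orbit 0 = {0}"
  using mat_1_in_orth_group by (auto simp: orth_orbit_def)

lemma orth_orbit_all_ones: "orth_orbit all_ones = {all_ones}"
  using mat_1_in_orth_group orth_group_fixes_all_ones
  by (auto simp: mem_orth_orbit_iff intro!: bexI[of _ "mat 1"])

lemma orth_orbit_eq_same_parity:
  fixes x :: "bit^'i"
  assumes "x \<notin> {0, all_ones}"
  shows "orth_orbit x = {y. y \<notin> {0, all_ones} \<and> bdot y y = bdot x x}"
proof (intro set_eqI iffI)
  fix y :: "bit^'i"
  assume "y \<in> orth_orbit x"
  then obtain A where A: "A \<in> orth_group" "y = A *v x"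
    by (auto simp: mem_orth_orbit_iff)
  have "x = transpose A *v y"
    using A by (simp add: orth_group_left_inverse del: transpose_matrix_vector)
  then have "y \<notin> {0, all_ones}"
    using assms orth_group_fixes_all_ones[OF transpose_in_orth_group[OF A(1)]] by auto
  then show "y \<in> {y. y \<notin> {0, all_ones} \<and> bdot y y = bdot x x}"
    using A by (simp add: orth_group_preserves_bdot)
next
  fix y :: "bit^'i"
  assume "y \<in> {y. y \<notin> {0, all_ones} \<and> bdot y y = bdot x x}"
  then show "y \<in> orth_orbit x"
    using assms by (intro mem_orth_orbit_if_same_parity) auto
qed

lemma orth_orbit_even:
  assumes "x \<in> even_vecs - {0, all_ones}"
  shows "orth_orbit x = even_vecs - {0, all_ones}"
  using assms by (auto simp: orth_orbit_eq_same_parity even_vecs_eq)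

lemma orth_orbit_odd:
  assumes "even CARD('i::finite)" "(x :: bit^'i) \<in> odd_vecs"
  shows "orth_orbit x = odd_vecs"
proof -
  have all_ones_even: "bdot (all_ones :: bit^'i) all_ones = 0"
    using assms(1) by (simp add: bdot_all_ones_self of_nat_bit_eq_0_iff)
  then have "x \<notin> {0, all_ones}"
    using assms(2) by (auto simp: odd_vecs_eq)
  then show ?thesis
    using assms(2) all_ones_even by (auto simp: orth_orbit_eq_same_parity odd_vecs_eq)
qed

lemma ex_even_vec_nonconstant:
  assumes "CARD('i::finite) \<ge> 3"
  shows "\<exists>e :: bit^'i. e \<in> even_vecs - {0, all_ones}"
proof -
  obtain T :: "'i set" where "card T = 3"
    using assms obtain_subset_with_card_n by blast
  then obtain a b c :: 'i where abc: "a \<noteq> b" "b \<noteq> c" "a \<noteq> c"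
    unfolding card_3_iff by blast
  define e :: "bit^'i" where "e = axis a 1 + axis b 1"
  have "e$a = 1" "e$b = 1" "e$c = 0"
    using abc by (simp_all add: e_def axis_def flip: one_add_one)
  moreover have "bdot e e = 0"
    by (simp add: e_def bdot_add_self bdot_axis_right)
  ultimately have "e \<in> even_vecs - {0, all_ones}"
    by (auto simp: even_vecs_eq all_ones_def)
  then show ?thesis ..
qed

lemma axis_in_odd_vecs: "axis a 1 \<in> odd_vecs"
  by (simp add: odd_vecs_eq bdot_axis_right)

lemma orth_orbit_cases:
  assumes "even CARD('i::finite)"
  shows "orth_orbit (x :: bit^'i) \<in> {{0}, {all_ones}, even_vecs - {0, all_ones}, odd_vecs}"
proof (cases "x \<in> odd_vecs")
  case True
  then show ?thesis
    by (simp add: orth_orbit_odd[OF assms])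
next
  case False
  then have "x \<in> even_vecs"
    by (simp add: even_vecs_def odd_vecs_def)
  then consider "x = 0" | "x = all_ones" | "x \<in> even_vecs - {0, all_ones}"
    by blast
  then show ?thesis
    by cases (simp_all add: orth_orbit_zero orth_orbit_all_ones orth_orbit_even)
qed

theorem mainTheorem14:
  fixes n :: nat
  assumes "CARD('i::finite) = 2 * n" and "n \<ge> 2"
  shows "range (orth_orbit :: bit ^ 'i \<Rightarrow> (bit ^ 'i) set)
           = {{0}, {all_ones}, even_vecs - {0, all_ones}, odd_vecs}
       \<and> card (range (orth_orbit :: bit ^ 'i \<Rightarrow> (bit ^ 'i) set)) = 4"
proof -
  have even: "even CARD('i)"
    using assms(1) by simp
  have "CARD('i) \<ge> 3"
    using assms by simp
  then obtain e :: "bit^'i" where e: "e \<in> even_vecs - {0, all_ones}"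
    using ex_even_vec_nonconstant by blast
  obtain w :: "bit^'i" where w: "w \<in> odd_vecs"
    using axis_in_odd_vecs by blast
  have attained: "{{0}, {all_ones}, even_vecs - {0, all_ones}, odd_vecs}
      = orth_orbit ` {0, all_ones, e, w}"
    by (simp add: orth_orbit_zero orth_orbit_all_ones orth_orbit_even[OF e]
        orth_orbit_odd[OF even w])
  have range: "range (orth_orbit :: bit^'i \<Rightarrow> _)
      = {{0}, {all_ones}, even_vecs - {0, all_ones}, odd_vecs}" (is "?R = ?S")
  proof
    show "?R \<subseteq> ?S"
      by (rule image_subsetI) (rule orth_orbit_cases[OF even])
    show "?S \<subseteq> ?R"
      unfolding attained by (rule image_mono[OF subset_UNIV])
  qed
  have "(0 :: bit^'i) \<notin> odd_vecs" "e \<notin> odd_vecs"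
    using e by (simp_all add: odd_vecs_eq even_vecs_eq)
  moreover have "(all_ones :: bit^'i) \<notin> odd_vecs"
    using even by (simp add: odd_vecs_eq bdot_all_ones_self of_nat_bit_eq_1_iff)
  ultimately have "distinct [{0}, {all_ones}, even_vecs - {0, all_ones}, odd_vecs :: (bit^'i) set]"
    using e w all_ones_neq_zero by (simp, blast)
  then have "card ?S = 4"
    using distinct_card by fastforce
  with range show ?thesis
    by simp
qed

end
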